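(* Let $F$ be a semi-safe sentence that contains no object constants. Then $\mathrm{SM}[F]$ entails $\forall\mathbf x\,\neg p_i(\mathbf x)$ for every predicate constant $p_i$ of arity $>0$ occurring in $F$ (where $\mathbf x$ is a list of distinct variables of the arity of $p_i$).
   Context: Formulas are first-order formulas over a signature with object constants, predicate constants and equality, but no function constants of arity $>0$. The primitive connectives are $\bot,\land,\lor,\rightarrow$ and the quantifiers $\forall,\exists$; $\neg F$ abbreviates $F\rightarrow\bot$, $\top$ abbreviates $\bot\rightarrow\bot$, and $F\leftrightarrow G$ abbreviates $(F\rightarrow G)\land(G\rightarrow F)$. A sentence is a formula without free variables. Stable model operator: for a sentence $F$, let $\mathbf p=p_1,\dots,p_n$ be all predicate constants occurring in $F$ and $\mathbf u=u_1,\dots,u_n$ distinct predicate variables with matching arities. $\mathbf u\le\mathbf p$ is $\bigwedge_i\forall\mathbf x(u_i(\mathbf x)\rightarrow p_i(\mathbf x))$, $\mathbf u=\mathbf p$ is $\bigwedge_i\forall\mathbf x(u_i(\mathbf x)\leftrightarrow p_i(\mathbf x))$, and $\mathbf u<\mathbf p$ is $(\mathbf u\le\mathbf p)\land\neg(\mathbf u=\mathbf p)$. $F^*(\mathbf u)$ is defined recursively: $p_i(\mathbf t)^*=u_i(\mathbf t)$; $(t_1=t_2)^*=(t_1=t_2)$; $\bot^*=\bot$; $(G\land H)^*=G^*\land H^*$; $(G\lor H)^*=G^*\lor H^*$; $(G\rightarrow H)^*=(G^*\rightarrow H^* )\land(G\rightarrow H)$; $(\forall xG)^*=\forall xG^*$;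 $(\exists xG)^*=\exists xG^*$. Then $\mathrm{SM}[F]$ is the second-order sentence $F\land\neg\exists\mathbf u((\mathbf u<\mathbf p)\land F^*(\mathbf u))$. Restricted variables: for a quantifier-free formula $F$, $\mathrm{RV}(F)$ is defined by: if $F$ is an equality between two variables, $\mathrm{RV}(F)=\emptyset$; if $F$ is any other atomic formula, $\mathrm{RV}(F)$ is the set of variables occurring in $F$; $\mathrm{RV}(\bot)=\emptyset$; $\mathrm{RV}(G\land H)=\mathrm{RV}(G)\cup\mathrm{RV}(H)$; $\mathrm{RV}(G\lor H)=\mathrm{RV}(G)\cap\mathrm{RV}(H)$; $\mathrm{RV}(G\rightarrow H)=\emptyset$. An occurrence of a subformula or variable is strictly positive if it is not in the antecedent of any implication. A sentence in prenex form $Q_1x_1\cdots Q_nx_nM$ ($M$ quantifier-free, $x_i$ distinct) is semi-safe if every strictly positive occurrence of every variable $x_i$ in $M$ belongs to a subformula $G\rightarrow H$ of $M$ with $x_i\in\mathrm{RV}(G)$. *)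

theory Defs
  imports Main
begin

text \<open>A predicate constant is identified by its name (type 'p) together with its arity,
  i.e. the occurrence Pr p ts is an occurrence of the predicate constant (p, length ts).\<close>

datatype 'c trm = Var nat | Cst 'c

datatype ('c, 'p) form =
    Bot
  | Pr 'p "'c trm list"
  | Eq "'c trm" "'c trm"
  | Conj "('c, 'p) form" "('c, 'p) form"
  | Disj "('c, 'p) form" "('c, 'p) form"
  | Imp "('c, 'p) form" "('c, 'p) form"
  | All nat "('c, 'p) form"
  | Ex nat "('c, 'p) form"

abbreviation Neg :: "('c, 'p) form \<Rightarrow> ('c, 'p) form" where
  "Neg F \<equiv> Imp F Bot"

fun tvars :: "'c trm \<Rightarrow> nat set" where
  "tvars (Var x) = {x}"
| "tvars (Cst c) = {}"

fun tobj_consts :: "'c trm \<Rightarrow> 'c set" where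
  "tobj_consts (Var x) = {}"
| "tobj_consts (Cst c) = {c}"

fun fv :: "('c, 'p) form \<Rightarrow> nat set" where
  "fv Bot = {}"
| "fv (Pr p ts) = (\<Union>t\<in>set ts. tvars t)"
| "fv (Eq s t) = tvars s \<union> tvars t"
| "fv (Conj G H) = fv G \<union> fv H"
| "fv (Disj G H) = fv G \<union> fv H"
| "fv (Imp G H) = fv G \<union> fv H"
| "fv (All x G) = fv G - {x}"
| "fv (Ex x G) = fv G - {x}"

definition sentence :: "('c, 'p) form \<Rightarrow> bool" where
  "sentence F \<longleftrightarrow> fv F = {}"

fun obj_consts :: "('c, 'p) form \<Rightarrow> 'c set" where
  "obj_consts Bot = {}"
| "obj_consts (Pr p ts) = (\<Union>t\<in>set ts. tobj_consts t)"
| "obj_consts (Eq s t) = tobj_consts s \<union> tobj_consts t"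
| "obj_consts (Conj G H) = obj_consts G \<union> obj_consts H"
| "obj_consts (Disj G H) = obj_consts G \<union> obj_consts H"
| "obj_consts (Imp G H) = obj_consts G \<union> obj_consts H"
| "obj_consts (All x G) = obj_consts G"
| "obj_consts (Ex x G) = obj_consts G"

fun preds :: "('c, 'p) form \<Rightarrow> ('p \<times> nat) set" where
  "preds Bot = {}"
| "preds (Pr p ts) = {(p, length ts)}"
| "preds (Eq s t) = {}"
| "preds (Conj G H) = preds G \<union> preds H"
| "preds (Disj G H) = preds G \<union> preds H"
| "preds (Imp G H) = preds G \<union> preds H"
| "preds (All x G) = preds G"
| "preds (Ex x G) = preds G"

text \<open>An interpretation has universe the type 'a (every type is nonempty), an
  interpretation cI of object constants, and an interpretation pI of predicate
  constants: the extent of the predicate constant (p, n) is the set of lists xs of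
  length n with pI p xs.\<close>

fun teval :: "('c \<Rightarrow> 'a) \<Rightarrow> (nat \<Rightarrow> 'a) \<Rightarrow> 'c trm \<Rightarrow> 'a" where
  "teval cI e (Var x) = e x"
| "teval cI e (Cst c) = cI c"

fun eval :: "('c \<Rightarrow> 'a) \<Rightarrow> ('p \<Rightarrow> 'a list \<Rightarrow> bool) \<Rightarrow> (nat \<Rightarrow> 'a) \<Rightarrow> ('c, 'p) form \<Rightarrow> bool" where
  "eval cI pI e Bot = False"
| "eval cI pI e (Pr p ts) = pI p (map (teval cI e) ts)"
| "eval cI pI e (Eq s t) = (teval cI e s = teval cI e t)"
| "eval cI pI e (Conj G H) = (eval cI pI e G \<and> eval cI pI e H)"
| "eval cI pI e (Disj G H) = (eval cI pI e G \<or> eval cI pI e H)"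
| "eval cI pI e (Imp G H) = (eval cI pI e G \<longrightarrow> eval cI pI e H)"
| "eval cI pI e (All x G) = (\<forall>a. eval cI pI (e(x := a)) G)"
| "eval cI pI e (Ex x G) = (\<exists>a. eval cI pI (e(x := a)) G)"

definition holds :: "('c \<Rightarrow> 'a) \<Rightarrow> ('p \<Rightarrow> 'a list \<Rightarrow> bool) \<Rightarrow> ('c, 'p) form \<Rightarrow> bool" where
  "holds cI pI F \<longleftrightarrow> (\<forall>e. eval cI pI e F)"

text \<open>F*(u) is a formula over the extended signature with predicate symbols 'p + 'p:
  Inl p is the original predicate constant p, Inr p is the predicate variable u
  corresponding to p (same arity).\<close>

fun lift :: "('c, 'p) form \<Rightarrow> ('c, 'p + 'p) form" where
  "lift F = map_form id Inl F"

fun star :: "('c, 'p) form \<Rightarrow> ('c, 'p + 'p) form" where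
  "star Bot = Bot"
| "star (Pr p ts) = Pr (Inr p) ts"
| "star (Eq s t) = Eq s t"
| "star (Conj G H) = Conj (star G) (star H)"
| "star (Disj G H) = Disj (star G) (star H)"
| "star (Imp G H) = Conj (Imp (star G) (star H)) (Imp (lift G) (lift H))"
| "star (All x G) = All x (star G)"
| "star (Ex x G) = Ex x (star G)"

definition pred_le :: "('c, 'p) form \<Rightarrow> ('p \<Rightarrow> 'a list \<Rightarrow> bool) \<Rightarrow> ('p \<Rightarrow> 'a list \<Rightarrow> bool) \<Rightarrow> bool" where
  "pred_le F U P \<longleftrightarrow> (\<forall>(p, n)\<in>preds F. \<forall>xs. length xs = n \<longrightarrow> U p xs \<longrightarrow> P p xs)"

definition pred_eq :: "('c, 'p) form \<Rightarrow> ('p \<Rightarrow> 'a list \<Rightarrow> bool) \<Rightarrow> ('p \<Rightarrow> 'a list \<Rightarrow> bool) \<Rightarrow> bool" where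
  "pred_eq F U P \<longleftrightarrow> (\<forall>(p, n)\<in>preds F. \<forall>xs. length xs = n \<longrightarrow> (U p xs \<longleftrightarrow> P p xs))"

text \<open>Truth of the second-order sentence SM[F] in an interpretation (standard semantics
  of second-order quantification over the predicate variables u).\<close>
definition SM_holds :: "('c \<Rightarrow> 'a) \<Rightarrow> ('p \<Rightarrow> 'a list \<Rightarrow> bool) \<Rightarrow> ('c, 'p) form \<Rightarrow> bool" where
  "SM_holds cI pI F \<longleftrightarrow>
     holds cI pI F \<and>
     \<not> (\<exists>U. pred_le F U pI \<and> \<not> pred_eq F U pI \<and> holds cI (case_sum pI U) (star F))"

fun qfree :: "('c, 'p) form \<Rightarrow> bool" where
  "qfree Bot = True"
| "qfree (Pr p ts) = True"
| "qfree (Eq s t) = True"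
| "qfree (Conj G H) = (qfree G \<and> qfree H)"
| "qfree (Disj G H) = (qfree G \<and> qfree H)"
| "qfree (Imp G H) = (qfree G \<and> qfree H)"
| "qfree (All x G) = False"
| "qfree (Ex x G) = False"

text \<open>RV (only meaningful on quantifier-free formulas).\<close>
fun rv :: "('c, 'p) form \<Rightarrow> nat set" where
  "rv (Eq (Var x) (Var y)) = {}"
| "rv (Eq s t) = tvars s \<union> tvars t"
| "rv (Pr p ts) = (\<Union>t\<in>set ts. tvars t)"
| "rv Bot = {}"
| "rv (Conj G H) = rv G \<union> rv H"
| "rv (Disj G H) = rv G \<inter> rv H"
| "rv (Imp G H) = {}"
| "rv (All x G) = {}"
| "rv (Ex x G) = {}"

text \<open>unguarded x M: some strictly positive occurrence of x in M does not belong to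
  any subformula G \<longrightarrow> H of M with x \<in> RV(G).\<close>
fun unguarded :: "nat \<Rightarrow> ('c, 'p) form \<Rightarrow> bool" where
  "unguarded x Bot = False"
| "unguarded x (Pr p ts) = (x \<in> (\<Union>t\<in>set ts. tvars t))"
| "unguarded x (Eq s t) = (x \<in> tvars s \<union> tvars t)"
| "unguarded x (Conj G H) = (unguarded x G \<or> unguarded x H)"
| "unguarded x (Disj G H) = (unguarded x G \<or> unguarded x H)"
| "unguarded x (Imp G H) = (x \<notin> rv G \<and> unguarded x H)"
| "unguarded x (All y G) = False"
| "unguarded x (Ex y G) = False"

datatype quant = QAll | QEx

fun prefix :: "(quant \<times> nat) list \<Rightarrow> ('c, 'p) form \<Rightarrow> ('c, 'p) form" where
  "prefix [] M = M"
| "prefix ((QAll, x) # qs) M = All x (prefix qs M)"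
| "prefix ((QEx, x) # qs) M = Ex x (prefix qs M)"

definition semi_safe :: "('c, 'p) form \<Rightarrow> bool" where
  "semi_safe F \<longleftrightarrow>
     (\<exists>qs M. F = prefix qs M \<and> qfree M \<and> distinct (map snd qs) \<and>
             (\<forall>x\<in>set (map snd qs). \<not> unguarded x M))"

fun alls :: "nat list \<Rightarrow> ('c, 'p) form \<Rightarrow> ('c, 'p) form" where
  "alls [] G = G"
| "alls (x # xs) G = All x (alls xs G)"

end

theory Submission
  imports Defs
begin

text \<open>Let U interpret each predicate variable by the nullary part of the corresponding
  predicate constant. Then the quantifier-free matrix M of F implies M*(U) under every
  assignment, by induction on M: an antecedent G with RV(G) \<noteq> {} has G*(U) false, since in the
  absence of object constants a restricted variable sits in an atom with arguments, which is
  empty under U; and every other strictly positive atom is nullary by semi-safety. Hence F*(U)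
  holds, so the minimality part of SM[F] makes U agree with the interpretation on the predicate
  constants of F, which are therefore empty in positive arity.\<close>

definition nullary_part :: "('p \<Rightarrow> 'a list \<Rightarrow> bool) \<Rightarrow> 'p \<Rightarrow> 'a list \<Rightarrow> bool" where
  "nullary_part P p xs \<longleftrightarrow> P p xs \<and> xs = []"

lemma eval_lift: "eval cI (case_sum pI U) e (lift G) = eval cI pI e G"
  by (induction G arbitrary: e) (simp_all add: comp_def trm.map_id)

lemma eval_star_imp_eval:
  assumes "\<And>p xs. U p xs \<Longrightarrow> pI p xs"
    and "eval cI (case_sum pI U) e (star G)"
  shows "eval cI pI e G"
  using assms(2)
proof (induction G arbitrary: e)
  case (Imp G H)
  then show ?case by (simp add: eval_lift del: lift.simps)
qed (auto intro: assms(1))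

lemma rv_empty_if_eval_star:
  assumes "obj_consts G = {}"
    and "\<And>p xs. U p xs \<Longrightarrow> xs = []"
    and "eval cI (case_sum pI U) e (star G)"
  shows "rv G = {}"
  using assms(1,3)
proof (induction G arbitrary: e)
  case (Eq s t)
  then show ?case by (cases s; cases t) auto
qed (auto dest: assms(2))

lemma unguarded_fv: "unguarded x M \<Longrightarrow> x \<in> fv M"
  by (induction M) auto

lemma eval_star_nullary_part:
  assumes "qfree M" "obj_consts M = {}" "\<forall>x. \<not> unguarded x M" "eval cI pI e M"
  shows "eval cI (case_sum pI (nullary_part pI)) e (star M)"
  using assms
proof (induction M arbitrary: e)
  case (Pr p ts)
  have "ts = []"
  proof (cases ts)
    case (Cons t _)
    with Pr.prems show ?thesis by (cases t) auto
  qed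
  with Pr.prems show ?case by (simp add: nullary_part_def)
next
  case (Imp G H)
  let ?I = "case_sum pI (nullary_part pI)"
  have "eval cI ?I e (star H)" if G_star: "eval cI ?I e (star G)"
  proof -
    have "rv G = {}"
      using rv_empty_if_eval_star[OF _ _ G_star] Imp.prems(2) by (simp add: nullary_part_def)
    then have "\<forall>x. \<not> unguarded x H" using Imp.prems(3) by simp
    moreover have "eval cI pI e G"
      using eval_star_imp_eval[OF _ G_star] by (simp add: nullary_part_def)
    ultimately show ?thesis using Imp by simp
  qed
  with Imp.prems(4) show ?case by (simp add: eval_lift del: lift.simps)
qed auto

lemma eval_star_prefix:
  assumes "\<And>e. eval cI pI e M \<Longrightarrow> eval cI (case_sum pI U) e (star M)"
    and "eval cI pI e (prefix qs M)"
  shows "eval cI (case_sum pI U) e (star (prefix qs M))"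
  using assms(2)
proof (induction qs arbitrary: e)
  case (Cons q qs)
  then show ?case by (cases q; cases "fst q") auto
qed (simp add: assms(1))

lemma fv_prefix: "fv (prefix qs M) = fv M - set (map snd qs)"
proof (induction qs)
  case (Cons q qs)
  then show ?case by (cases q; cases "fst q") auto
qed simp

lemma obj_consts_prefix: "obj_consts (prefix qs M) = obj_consts M"
proof (induction qs)
  case (Cons q qs)
  then show ?case by (cases q; cases "fst q") auto
qed simp

lemma semi_safe_sentenceE:
  assumes "sentence F" "semi_safe F"
  obtains qs M where "F = prefix qs M" "qfree M" "\<forall>x. \<not> unguarded x M"
proof -
  obtain qs M where F: "F = prefix qs M" and "qfree M"
    and "\<forall>x\<in>set (map snd qs). \<not> unguarded x M"
    using assms(2) unfolding semi_safe_def by blast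
  moreover have "fv M \<subseteq> set (map snd qs)"
    using assms(1) F fv_prefix[of qs M] unfolding sentence_def by auto
  ultimately show thesis using that unguarded_fv by blast
qed

lemma holds_star_nullary_part:
  assumes "sentence F" "semi_safe F" "obj_consts F = {}" "holds cI pI F"
  shows "holds cI (case_sum pI (nullary_part pI)) (star F)"
proof -
  obtain qs M where F: "F = prefix qs M" and "qfree M" "\<forall>x. \<not> unguarded x M"
    using semi_safe_sentenceE[OF assms(1,2)] .
  moreover have "obj_consts M = {}" using assms(3) F by (simp add: obj_consts_prefix)
  ultimately show ?thesis
    using assms(4) unfolding holds_def by (blast intro: eval_star_prefix eval_star_nullary_part)
qed

lemma SM_holds_minimal:
  assumes "SM_holds cI pI F" "pred_le F U pI" "holds cI (case_sum pI U) (star F)"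
  shows "pred_eq F U pI"
  using assms unfolding SM_holds_def by blast

lemma holds_alls: "(\<And>e. eval cI pI e G) \<Longrightarrow> holds cI pI (alls vs G)"
  unfolding holds_def by (induction vs) auto

theorem corollary1:
  fixes F :: "('c, 'p) form"
    and cI :: "'c \<Rightarrow> 'a"
    and pI :: "'p \<Rightarrow> 'a list \<Rightarrow> bool"
  assumes "sentence F"
    and "semi_safe F"
    and "obj_consts F = {}"
    and "(p, n) \<in> preds F"
    and "n > 0"
    and "SM_holds cI pI F"
  shows "holds cI pI (alls [0..<n] (Neg (Pr p (map Var [0..<n]))))"
proof (rule holds_alls)
  fix e :: "nat \<Rightarrow> 'a"
  let ?U = "nullary_part pI"
  have "holds cI pI F" using assms(6) by (simp add: SM_holds_def)
  then have "holds cI (case_sum pI ?U) (star F)"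
    using holds_star_nullary_part[OF assms(1-3)] by blast
  moreover have "pred_le F ?U pI" by (auto simp: pred_le_def nullary_part_def)
  ultimately have "pred_eq F ?U pI" using SM_holds_minimal[OF assms(6)] by blast
  moreover have "length (map e [0..<n]) = n" "map e [0..<n] \<noteq> []" using assms(5) by auto
  ultimately have "\<not> pI p (map e [0..<n])"
    using assms(4) unfolding pred_eq_def nullary_part_def by blast
  then show "eval cI pI e (Neg (Pr p (map Var [0..<n])))" by (simp add: comp_def)
qed

end
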